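(* Let $\mathcal{M}=(Q,V,I_0,T,F)$ be a polyglot model. Suppose that for every transition $((q,q'),(g,u))\in T$, with $u=\{(d,d')\mid d'=f_k\circ\cdots\circ f_1(d)\}$ where $f_j=(C_j,\mathcal{L}_j)\in F$, we are given for each $j\in\{1,\dots,k\}$ a valid contract $(P_j,Q_j)$ for $f_j$ such that for every $j\in\{1,\dots,k-1\}$, $$\forall d\in D(V).\ [\![Q_j]\!]_{\mathcal{L}_j}(d)\implies [\![P_{j+1}]\!]_{\mathcal{L}_{j+1}}(d).$$ Let $\mathcal{M}'$ be the model obtained from $\mathcal{M}$ by replacing, in every transition, the update relation $u$ by $$u'=\{(a,b)\in D(V)\times D(V)\mid [\![P_1]\!]_{\mathcal{L}_1}(a)\implies [\![Q_k]\!]_{\mathcal{L}_k}(b)\},$$ keeping modes, variables, initial states and guards unchanged. Then for every property $\phi$ (a set of infinite traces over $D(V)$), if $\mathcal{M}'\models\phi$ then $\mathcal{M}\models\phi$.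
   Context: An Extended State Machine (ESM) is a tuple $(Q,V,I_0,T)$: $Q$ a set of modes, $V$ a set of typed variables (with $D(v)$ the domain of $v$ and $D(V)$ the Cartesian product of the domains, i.e. the set of assignments $d$ to $V$), $I_0\subseteq Q\times D(V)$ a set of initial states, and $T\subseteq (Q\times Q)\times(G\times U)$ a set of transitions, each labelled by a guard $g:D(V)\to\mathbb{B}$ and an update relation $u\subseteq D(V)\times D(V)$. An execution starts in an initial state and, from a state $(q,d)$, takes a transition $((q,q'),(g,u))$ with $g(d)$ true and moves to a state $(q',d')$ with $(d,d')\in u$. A trace of an execution is the infinite sequence of assignments $d$ seen along it; $\mathcal{T}(\mathcal{M})$ is the set of all traces of $\mathcal{M}$. A property $\phi$ is a set of traces, and $\mathcal{M}\models\phi$ means $\mathcal{T}(\mathcal{M})\subseteq\phi$. A language $\mathcal{L}$ is a set of terms and predicates over $V$ with fixed interpretations: each term $t$ denotes a function $[\![t]\!]_{\mathcal{L}}:D(V)\to D(V)$ and each predicate $p$ denotes $[\![p]\!]_{\mathcal{L}}:D(V)\to\mathbb{B}$. A procedure is a pair $f=(C,\mathcal{L})$ with $C$ a term of $\mathcal{L}$ (procedures are total and terminating); for procedures, $f_1\circ f_2(d)=[\![C_1]\!]_{\mathcal{L}_1}([\![C_2]\!]_{\mathcal{L}_2}(d))$. A polyglot model is a tuple $(Q,V,I_0,T,F)$ where $(Q,V,I_0,T)$ is an ESM and $F$ is a set of procedures, such that every transition's update relation has the form $u=\{(d,d')\mid d'=f_k\circ\cdots\circ f_1(d)\}$ for some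 $f_i\in F$. A contract for a procedure $(C,\mathcal{L})$ is a pair $(P,Q)$ of predicates of $\mathcal{L}$; it is valid iff $\forall d,d'\in D(V).\ ([\![P]\!]_{\mathcal{L}}(d)\wedge d'=[\![C]\!]_{\mathcal{L}}(d))\implies [\![Q]\!]_{\mathcal{L}}(d')$. *)

theory Defs
  imports Main
begin

text \<open>
  Assignments to the variables V are modelled by a type 'd (= D(V)); modes by a type 'q.
  A language L is abstract (type 'lang), with fixed interpretation functions
  tsem L C : 'd => 'd for terms and psem L P : 'd => bool for predicates.
\<close>

type_synonym ('q, 'd) transition = "('q \<times> 'q) \<times> (('d \<Rightarrow> bool) \<times> ('d \<times> 'd) set)"
type_synonym ('t, 'lang) procedure = "'t \<times> 'lang"

definition guard_of :: "('q, 'd) transition \<Rightarrow> ('d \<Rightarrow> bool)" where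
  "guard_of tr = fst (snd tr)"

definition update_of :: "('q, 'd) transition \<Rightarrow> ('d \<times> 'd) set" where
  "update_of tr = snd (snd tr)"

definition is_execution ::
  "'q set \<Rightarrow> ('q \<times> 'd) set \<Rightarrow> ('q, 'd) transition set \<Rightarrow> (nat \<Rightarrow> 'q \<times> 'd) \<Rightarrow> bool" where
  "is_execution Q I0 T s \<longleftrightarrow> s 0 \<in> I0 \<and>
     (\<forall>i. \<exists>g u. ((fst (s i), fst (s (Suc i))), (g, u)) \<in> T \<and> g (snd (s i))
                 \<and> (snd (s i), snd (s (Suc i))) \<in> u)"

definition traces ::
  "'q set \<Rightarrow> ('q \<times> 'd) set \<Rightarrow> ('q, 'd) transition set \<Rightarrow> (nat \<Rightarrow> 'd) set" where
  "traces Q I0 T = {\<lambda>i. snd (s i) | s. is_execution Q I0 T s}"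

definition models ::
  "'q set \<Rightarrow> ('q \<times> 'd) set \<Rightarrow> ('q, 'd) transition set \<Rightarrow> (nat \<Rightarrow> 'd) set \<Rightarrow> bool" where
  "models Q I0 T \<phi> \<longleftrightarrow> traces Q I0 T \<subseteq> \<phi>"

definition proc_sem :: "('lang \<Rightarrow> 't \<Rightarrow> 'd \<Rightarrow> 'd) \<Rightarrow> ('t, 'lang) procedure \<Rightarrow> 'd \<Rightarrow> 'd" where
  "proc_sem tsem f = tsem (snd f) (fst f)"

text \<open>Composition f_k o ... o f_1 for the list [f_1, ..., f_k] (f_1 applied first).\<close>
definition comp_procs :: "('lang \<Rightarrow> 't \<Rightarrow> 'd \<Rightarrow> 'd) \<Rightarrow> ('t, 'lang) procedure list \<Rightarrow> 'd \<Rightarrow> 'd" where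
  "comp_procs tsem fs d = fold (proc_sem tsem) fs d"

definition composed_update ::
  "('lang \<Rightarrow> 't \<Rightarrow> 'd \<Rightarrow> 'd) \<Rightarrow> ('t, 'lang) procedure list \<Rightarrow> ('d \<times> 'd) set" where
  "composed_update tsem fs = {(d, d'). d' = comp_procs tsem fs d}"

definition polyglot_model ::
  "('lang \<Rightarrow> 't \<Rightarrow> 'd \<Rightarrow> 'd) \<Rightarrow> 'q set \<Rightarrow> ('q \<times> 'd) set \<Rightarrow> ('q, 'd) transition set
     \<Rightarrow> ('t, 'lang) procedure set \<Rightarrow> bool" where
  "polyglot_model tsem Q I0 T F \<longleftrightarrow>
     (\<forall>tr\<in>T. \<exists>fs. fs \<noteq> [] \<and> set fs \<subseteq> F \<and> update_of tr = composed_update tsem fs)"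

definition valid_contract ::
  "('lang \<Rightarrow> 't \<Rightarrow> 'd \<Rightarrow> 'd) \<Rightarrow> ('lang \<Rightarrow> 'p \<Rightarrow> 'd \<Rightarrow> bool) \<Rightarrow> ('t, 'lang) procedure \<Rightarrow> 'p \<times> 'p \<Rightarrow> bool" where
  "valid_contract tsem psem f c \<longleftrightarrow>
     (\<forall>d d'. psem (snd f) (fst c) d \<and> d' = tsem (snd f) (fst f) d \<longrightarrow> psem (snd f) (snd c) d')"

definition abstract_update ::
  "('lang \<Rightarrow> 'p \<Rightarrow> 'd \<Rightarrow> bool) \<Rightarrow> ('t, 'lang) procedure list \<Rightarrow> ('p \<times> 'p) list \<Rightarrow> ('d \<times> 'd) set" where
  "abstract_update psem fs cs =
     {(a, b). psem (snd (hd fs)) (fst (hd cs)) a \<longrightarrow> psem (snd (last fs)) (snd (last cs)) b}"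

end

theory Submission
  imports Defs
begin

text \<open>Along every transition the concrete update d' = f_k(...(f_1 d)) satisfies the abstract
  update: if P_1 holds of d, then validity of the contracts and the implications Q_j ==> P_(j+1)
  carry the postcondition Q_j through each prefix f_j o ... o f_1, ending with Q_k of d'.
  So every transition of the model is contained in the corresponding abstract one with the same
  modes and guard; every execution of the model is an execution of the abstraction, and trace
  inclusion gives the refinement of properties.\<close>

definition overapproximates :: "('q, 'd) transition set \<Rightarrow> ('q, 'd) transition set \<Rightarrow> bool" where
  "overapproximates T' T \<longleftrightarrow>
     (\<forall>tr\<in>T. \<exists>tr'\<in>T'. fst tr' = fst tr \<and> (\<forall>d. guard_of tr d \<longrightarrow> guard_of tr' d)
                      \<and> update_of tr \<subseteq> update_of tr')"

lemma is_execution_overapproximation: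
  assumes exec: "is_execution Q I0 T s" and over: "overapproximates T' T"
  shows "is_execution Q I0 T' s"
  unfolding is_execution_def
proof (intro conjI allI)
  show "s 0 \<in> I0" using exec by (simp add: is_execution_def)
next
  fix i
  obtain g u where tr: "((fst (s i), fst (s (Suc i))), (g, u)) \<in> T"
    and "g (snd (s i))" and "(snd (s i), snd (s (Suc i))) \<in> u"
    using exec unfolding is_execution_def by blast
  moreover obtain tr' where "tr' \<in> T'" and "fst tr' = (fst (s i), fst (s (Suc i)))"
    and "\<forall>d. g d \<longrightarrow> guard_of tr' d" and "u \<subseteq> update_of tr'"
    using over tr unfolding overapproximates_def guard_of_def update_of_def by fastforce
  ultimately show "\<exists>g u. ((fst (s i), fst (s (Suc i))), g, u) \<in> T' \<and> g (snd (s i))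
                         \<and> (snd (s i), snd (s (Suc i))) \<in> u"
    by (metis guard_of_def update_of_def prod.collapse subsetD)
qed

lemma traces_overapproximation:
  "overapproximates T' T \<Longrightarrow> traces Q I0 T \<subseteq> traces Q I0 T'"
  unfolding traces_def using is_execution_overapproximation by blast

lemma models_overapproximation:
  "overapproximates T' T \<Longrightarrow> models Q I0 T' \<phi> \<Longrightarrow> models Q I0 T \<phi>"
  unfolding models_def using traces_overapproximation by blast

lemma valid_contractD:
  "valid_contract tsem psem f c \<Longrightarrow> psem (snd f) (fst c) d
    \<Longrightarrow> psem (snd f) (snd c) (proc_sem tsem f d)"
  unfolding valid_contract_def proc_sem_def by blast

lemma post_after_prefix:
  assumes valid: "\<forall>j < length fs. valid_contract tsem psem (fs ! j) (cs ! j)"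
    and chain: "\<forall>j. Suc j < length fs \<longrightarrow>
                  (\<forall>d. psem (snd (fs ! j)) (snd (cs ! j)) d
                       \<longrightarrow> psem (snd (fs ! Suc j)) (fst (cs ! Suc j)) d)"
    and pre: "psem (snd (fs ! 0)) (fst (cs ! 0)) d"
  shows "j < length fs
    \<Longrightarrow> psem (snd (fs ! j)) (snd (cs ! j)) (fold (proc_sem tsem) (take (Suc j) fs) d)"
proof (induction j)
  case 0
  then have "valid_contract tsem psem (fs ! 0) (cs ! 0)" using valid by blast
  from valid_contractD[OF this pre] show ?case using 0 by (cases fs) auto
next
  case (Suc j)
  let ?x = "fold (proc_sem tsem) (take (Suc j) fs) d"
  have "psem (snd (fs ! j)) (snd (cs ! j)) ?x" using Suc by simp
  then have "psem (snd (fs ! Suc j)) (fst (cs ! Suc j)) ?x" using chain Suc.prems by blast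
  then have "psem (snd (fs ! Suc j)) (snd (cs ! Suc j)) (proc_sem tsem (fs ! Suc j) ?x)"
    using valid Suc.prems by (blast intro: valid_contractD)
  moreover have "take (Suc (Suc j)) fs = take (Suc j) fs @ [fs ! Suc j]"
    using Suc.prems by (simp add: take_Suc_conv_app_nth)
  ultimately show ?case by simp
qed

lemma composed_update_subset_abstract_update:
  assumes ne: "fs \<noteq> []" and len: "length cs = length fs"
    and valid: "\<forall>j < length fs. valid_contract tsem psem (fs ! j) (cs ! j)"
    and chain: "\<forall>j. Suc j < length fs \<longrightarrow>
                  (\<forall>d. psem (snd (fs ! j)) (snd (cs ! j)) d
                       \<longrightarrow> psem (snd (fs ! Suc j)) (fst (cs ! Suc j)) d)"
  shows "composed_update tsem fs \<subseteq> abstract_update psem fs cs"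
proof -
  have cs_ne: "cs \<noteq> []" using ne len by auto
  have "psem (snd (last fs)) (snd (last cs)) (comp_procs tsem fs d)"
    if "psem (snd (hd fs)) (fst (hd cs)) d" for d
  proof -
    have "psem (snd (fs ! 0)) (fst (cs ! 0)) d" using that ne cs_ne by (simp add: hd_conv_nth)
    from post_after_prefix[OF valid chain this, of "length fs - 1"]
    show ?thesis using ne cs_ne len by (simp add: last_conv_nth comp_procs_def)
  qed
  then show ?thesis by (auto simp: composed_update_def abstract_update_def)
qed

theorem theorem1:
  fixes tsem :: "'lang \<Rightarrow> 't \<Rightarrow> 'd \<Rightarrow> 'd"
    and psem :: "'lang \<Rightarrow> 'p \<Rightarrow> 'd \<Rightarrow> bool"
    and Q :: "'q set"
    and I0 :: "('q \<times> 'd) set"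
    and T :: "('q, 'd) transition set"
    and F :: "('t, 'lang) procedure set"
    and procs :: "('q, 'd) transition \<Rightarrow> ('t, 'lang) procedure list"
    and contracts :: "('q, 'd) transition \<Rightarrow> ('p \<times> 'p) list"
    and \<phi> :: "(nat \<Rightarrow> 'd) set"
  assumes model: "polyglot_model tsem Q I0 T F"
    and decomp: "\<forall>tr\<in>T. procs tr \<noteq> [] \<and> set (procs tr) \<subseteq> F
                   \<and> update_of tr = composed_update tsem (procs tr)"
    and len: "\<forall>tr\<in>T. length (contracts tr) = length (procs tr)"
    and valid: "\<forall>tr\<in>T. \<forall>j < length (procs tr).
                  valid_contract tsem psem (procs tr ! j) (contracts tr ! j)"
    and chain: "\<forall>tr\<in>T. \<forall>j. Suc j < length (procs tr) \<longrightarrow>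
                  (\<forall>d. psem (snd (procs tr ! j)) (snd (contracts tr ! j)) d
                       \<longrightarrow> psem (snd (procs tr ! Suc j)) (fst (contracts tr ! Suc j)) d)"
    and sat': "models Q I0
                 ((\<lambda>tr. (fst tr, (guard_of tr, abstract_update psem (procs tr) (contracts tr)))) ` T) \<phi>"
  shows "models Q I0 T \<phi>"
proof (rule models_overapproximation[OF _ sat'])
  have "update_of tr \<subseteq> abstract_update psem (procs tr) (contracts tr)" if "tr \<in> T" for tr
    using composed_update_subset_abstract_update decomp len valid chain that by metis
  then show "overapproximates
      ((\<lambda>tr. (fst tr, (guard_of tr, abstract_update psem (procs tr) (contracts tr)))) ` T) T"
    unfolding overapproximates_def by (force simp: guard_of_def update_of_def)
qed

end
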